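(* Fix a utility call $\ell$ with anchor interval $[\underline u^{(a_\ell)},\overline u^{(a_\ell)}]$ and let $w_a:=\mathrm{logit}(\overline u^{(a_\ell)})-\mathrm{logit}(\underline u^{(a_\ell)})$. Assume the true comparison probability satisfies $p_\ell\in[\kappa,1-\kappa]$ for some $\kappa\in(0,\tfrac12]$, let $\eta>0$ satisfy $w_a<8\eta$, and choose $$K_\ell\ge\max\Big\{\frac{8\log(2/\delta_\ell)}{\kappa^2},\ \frac{32\log(2/\delta_\ell)}{\kappa^2(8\eta-w_a)^2}\Big\}.$$ Then on the event that $u^{(a_\ell)}(\overline y^{(a_\ell)})\in[\underline u^{(a_\ell)},\overline u^{(a_\ell)}]$ and $p_\ell\in[p^-_\ell,p^+_\ell]$, the transported interval satisfies $\overline u^{(i_\ell)}-\underline u^{(i_\ell)}\le2\eta$.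
   Context: Bradley–Terry utility model: each task–incumbent pair $(i,z)$ has a score $\theta^{(i)}(z)\in\mathbb R$, normalized so that a fixed reference has score $0$, and the utility is $u^{(i)}(z)=\sigma(\theta^{(i)}(z))$ with $\sigma(x)=1/(1+e^{-x})$, $\mathrm{logit}(p)=\log(p/(1-p))$ (with $\mathrm{logit}(0)=-\infty$, $\mathrm{logit}(1)=+\infty$, $\sigma(-\infty)=0$, $\sigma(+\infty)=1$). At utility call $\ell$, candidate task $i_\ell$ with incumbent $z$ is compared with anchor task $a_\ell$ with incumbent $z'$; the true comparison probability is $p_\ell=\sigma(\theta^{(i_\ell)}(z)-\theta^{(a_\ell)}(z'))$. One draws $K_\ell$ votes $b_{\ell,k}\in\{0,1\}$, conditionally independent with mean $p_\ell$; $\hat p_\ell:=K_\ell^{-1}\sum_kb_{\ell,k}$. With failure budget $\delta_\ell\in(0,1)$, let $\theta_p:=\sqrt{\log(2/\delta_\ell)/(2K_\ell)}$, $p^-_\ell:=\mathrm{clip}_{[0,1]}(\hat p_\ell-\theta_p)$, $p^+_\ell:=\mathrm{clip}_{[0,1]}(\hat p_\ell+\theta_p)$. Given an anchor interval $[\underline u^{(a_\ell)},\overline u^{(a_\ell)}]$, the transported interval is $\underline u^{(i_\ell)}:=\sigma(\mathrm{logit}(\underline u^{(a_\ell)})+\mathrm{logit}(p^-_\ell))$, $\overline u^{(i_\ell)}:=\sigma(\mathrm{logit}(\overline u^{(a_\ell)})+\mathrm{logit}(p^+_\ell))$. *)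

theory Defs
  imports Complex_Main "HOL-Library.Extended_Real"
begin

definition sigmoid :: "real \<Rightarrow> real" where
  "sigmoid x = 1 / (1 + exp (- x))"

fun esigmoid :: "ereal \<Rightarrow> real" where
  "esigmoid (ereal x) = sigmoid x"
| "esigmoid PInfty = 1"
| "esigmoid MInfty = 0"

definition elogit :: "real \<Rightarrow> ereal" where
  "elogit p = (if p \<le> 0 then MInfty else if 1 \<le> p then PInfty
               else ereal (ln (p / (1 - p))))"

definition clip01 :: "real \<Rightarrow> real" where
  "clip01 x = max 0 (min 1 x)"

end

theory Submission
  imports Defs
begin

text \<open>Once the Hoeffding radius is at most \<kappa>/4, both confidence bounds lie in
  [\<kappa>/2, 1 - \<kappa>/2], so no clipping occurs and logit is (4/\<kappa>)-Lipschitz there; the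
  radius bound in terms of 8\<eta> - w then makes the transported interval at most 8\<eta> wide
  in logit space, and the (1/4)-Lipschitz sigmoid maps this to width 2\<eta>.\<close>

definition logit :: "real \<Rightarrow> real" where
  "logit p = ln (p / (1 - p))"

lemma elogit_eq_logit: "0 < p \<Longrightarrow> p < 1 \<Longrightarrow> elogit p = ereal (logit p)"
  by (simp add: elogit_def logit_def)

lemma elogit_diff_eq_ereal:
  assumes "elogit hi - elogit lo = ereal w"
  shows "0 < lo" "lo < 1" "0 < hi" "hi < 1" "w = logit hi - logit lo"
  using assms by (auto simp: elogit_def logit_def split: if_splits)

lemma sigmoid_mono: "y \<le> x \<Longrightarrow> sigmoid y \<le> sigmoid x"
  unfolding sigmoid_def
  by (intro divide_left_mono) (auto intro!: mult_pos_pos add_pos_pos)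

lemma has_real_derivative_sigmoid:
  "(sigmoid has_real_derivative sigmoid x * (1 - sigmoid x)) (at x)"
proof -
  have pos: "1 + exp (- x) > 0"
    by (simp add: add_pos_pos)
  have "((\<lambda>x. 1 / (1 + exp (- x))) has_real_derivative exp (- x) / (1 + exp (- x))\<^sup>2) (at x)"
    using pos by (auto intro!: derivative_eq_intros simp: power2_eq_square)
  moreover have "exp (- x) / (1 + exp (- x))\<^sup>2 = sigmoid x * (1 - sigmoid x)"
    using pos by (simp add: sigmoid_def field_simps power2_eq_square)
  ultimately show ?thesis
    by (simp add: sigmoid_def[abs_def])
qed

lemma sigmoid_diff_le:
  assumes "y \<le> x"
  shows "sigmoid x - sigmoid y \<le> (x - y) / 4"
proof -
  have "y / 4 - sigmoid y \<le> x / 4 - sigmoid x"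
  proof (rule DERIV_nonneg_imp_nondecreasing[OF assms])
    fix z :: real
    have "sigmoid z * (1 - sigmoid z) \<le> 1 / 4"
      using zero_le_power2[of "sigmoid z - 1 / 2"] by (simp add: power2_eq_square algebra_simps)
    moreover have "((\<lambda>z. z / 4 - sigmoid z) has_real_derivative
        1 / 4 - sigmoid z * (1 - sigmoid z)) (at z)"
      by (auto intro!: derivative_eq_intros has_real_derivative_sigmoid)
    ultimately show "\<exists>d. ((\<lambda>z. z / 4 - sigmoid z) has_real_derivative d) (at z) \<and> 0 \<le> d"
      by fastforce
  qed
  then show ?thesis
    by simp
qed

lemma has_real_derivative_logit:
  assumes "0 < x" "x < 1"
  shows "(logit has_real_derivative 1 / (x * (1 - x))) (at x)"
proof -
  have "((\<lambda>x. x / (1 - x)) has_real_derivative 1 / (1 - x)\<^sup>2) (at x)"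
    using assms by (auto intro!: derivative_eq_intros simp: field_simps power2_eq_square)
  then have "((\<lambda>x. ln (x / (1 - x))) has_real_derivative 1 / (x / (1 - x)) * (1 / (1 - x)\<^sup>2)) (at x)"
    using assms by (intro DERIV_chain2[OF DERIV_ln_divide]) simp_all
  moreover have "1 / (x / (1 - x)) * (1 / (1 - x)\<^sup>2) = 1 / (x * (1 - x))"
    using assms by (simp add: power2_eq_square)
  ultimately show ?thesis
    by (simp add: logit_def[abs_def])
qed

lemma logit_diff_le:
  assumes c: "0 < c" and ab: "c \<le> a" "a \<le> b" "b \<le> 1 - c"
  shows "logit b - logit a \<le> (b - a) / (c * (1 - c))"
proof -
  have "a / (c * (1 - c)) - logit a \<le> b / (c * (1 - c)) - logit b"
  proof (rule DERIV_nonneg_imp_nondecreasing[OF ab(2)])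
    fix x assume x: "a \<le> x" "x \<le> b"
    have x01: "0 < x" "x < 1"
      using x ab c by auto
    have "x * (1 - x) - c * (1 - c) = (x - c) * (1 - c - x)"
      by (simp add: algebra_simps)
    also have "\<dots> \<ge> 0"
      using x ab by (intro mult_nonneg_nonneg) auto
    finally have "1 / (x * (1 - x)) \<le> 1 / (c * (1 - c))"
      using c ab x01 by (intro divide_left_mono) auto
    moreover have "((\<lambda>x. x / (c * (1 - c)) - logit x) has_real_derivative
        1 / (c * (1 - c)) - 1 / (x * (1 - x))) (at x)"
      using x01 c ab by (auto intro!: derivative_eq_intros has_real_derivative_logit)
    ultimately show "\<exists>d. ((\<lambda>x. x / (c * (1 - c)) - logit x) has_real_derivative d) (at x) \<and> 0 \<le> d"
      by fastforce
  qed
  then show ?thesis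
    by (simp add: diff_divide_distrib)
qed

lemma sqrt_le_radius:
  fixes K L r :: real
  assumes "0 < r" "0 < K" "L / (2 * r\<^sup>2) \<le> K"
  shows "sqrt (L / (2 * K)) \<le> r"
proof -
  have "L \<le> K * (2 * r\<^sup>2)"
    using assms by (simp add: pos_divide_le_eq)
  then have "L / (2 * K) \<le> r\<^sup>2"
    using assms(2) by (simp add: pos_divide_le_eq mult.commute mult.left_commute)
  then show ?thesis
    using assms(1) by (simp add: real_le_lsqrt)
qed

lemma confidence_bounds_interior:
  assumes "0 < \<kappa>" "\<kappa> \<le> p" "p \<le> 1 - \<kappa>" "t \<le> \<kappa> / 4"
    and "clip01 (m - t) \<le> p" "p \<le> clip01 (m + t)"
  shows "\<kappa> / 2 \<le> m - t" "m + t \<le> 1 - \<kappa> / 2"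
proof -
  have "m - t \<le> p" "p \<le> m + t"
    using assms unfolding clip01_def by auto
  then show "\<kappa> / 2 \<le> m - t" "m + t \<le> 1 - \<kappa> / 2"
    using assms by linarith+
qed

lemma logit_diff_le_inner:
  assumes "0 < \<kappa>" "\<kappa> \<le> 1 / 2" "\<kappa> / 2 \<le> a" "a \<le> b" "b \<le> 1 - \<kappa> / 2"
  shows "logit b - logit a \<le> 4 * (b - a) / \<kappa>"
proof -
  have "\<kappa> * \<kappa> \<le> \<kappa> * 1"
    using assms by (intro mult_left_mono) auto
  then have quarter: "\<kappa> / 4 \<le> \<kappa> / 2 * (1 - \<kappa> / 2)"
    by (simp add: algebra_simps)
  have "logit b - logit a \<le> (b - a) / (\<kappa> / 2 * (1 - \<kappa> / 2))"
    by (rule logit_diff_le) (use assms in auto)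
  also have "\<dots> \<le> (b - a) / (\<kappa> / 4)"
    using assms quarter by (intro divide_left_mono) auto
  also have "\<dots> = 4 * (b - a) / \<kappa>"
    by simp
  finally show ?thesis .
qed

lemma transported_width_le:
  assumes kappa: "0 < \<kappa>" "\<kappa> \<le> 1 / 2"
    and p: "\<kappa> \<le> p" "p \<le> 1 - \<kappa>" "clip01 (m - t) \<le> p" "p \<le> clip01 (m + t)"
    and t: "0 \<le> t" "t \<le> \<kappa> / 4" "t \<le> \<kappa> * (8 * \<eta> - w) / 8"
    and wa: "elogit hi - elogit lo = ereal w"
    and eta: "0 \<le> \<eta>"
  shows "esigmoid (elogit hi + elogit (clip01 (m + t)))
       - esigmoid (elogit lo + elogit (clip01 (m - t))) \<le> 2 * \<eta>"
proof -
  have lower: "\<kappa> / 2 \<le> m - t" and upper: "m + t \<le> 1 - \<kappa> / 2"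
    using confidence_bounds_interior[OF kappa(1) p(1,2) t(2) p(3,4)] by auto
  have "logit (m + t) - logit (m - t) \<le> 4 * (2 * t) / \<kappa>"
    using logit_diff_le_inner[OF kappa lower _ upper] t by simp
  also have "\<dots> \<le> 8 * \<eta> - w"
    using kappa t by (simp add: field_simps)
  finally have logit_width: "logit (m + t) - logit (m - t) \<le> 8 * \<eta> - w" .
  note anchor = elogit_diff_eq_ereal[OF wa]
  define X where "X = logit hi + logit (m + t)"
  define Y where "Y = logit lo + logit (m - t)"
  have "X \<le> Y + 8 * \<eta>"
    using logit_width anchor(5) unfolding X_def Y_def by simp
  then have "sigmoid X - sigmoid Y \<le> sigmoid (Y + 8 * \<eta>) - sigmoid Y"
    using sigmoid_mono by simp
  also have "\<dots> \<le> 2 * \<eta>"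
    using sigmoid_diff_le[of Y "Y + 8 * \<eta>"] eta by simp
  finally have "sigmoid X - sigmoid Y \<le> 2 * \<eta>" .
  moreover have "0 < m - t" "m + t < 1"
    using lower upper kappa by auto
  moreover have "clip01 (m + t) = m + t" "clip01 (m - t) = m - t"
    using lower upper kappa t unfolding clip01_def by auto
  ultimately show ?thesis
    using t anchor by (simp add: X_def Y_def elogit_eq_logit)
qed

theorem theoremC3:
  fixes K :: nat and b :: "nat \<Rightarrow> real"
    and \<delta> \<kappa> \<eta> w lo hi \<theta>i \<theta>a :: real
  assumes votes: "\<forall>k<K. b k \<in> {0, 1}"
    and delta: "0 < \<delta>" "\<delta> < 1"
    and kappa: "0 < \<kappa>" "\<kappa> \<le> 1/2"
    and p_range: "\<kappa> \<le> sigmoid (\<theta>i - \<theta>a)" "sigmoid (\<theta>i - \<theta>a) \<le> 1 - \<kappa>"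
    and wa: "elogit hi - elogit lo = ereal w"
    and eta: "0 < \<eta>" "w < 8 * \<eta>"
    and K_ge: "real K \<ge> max (8 * ln (2 / \<delta>) / \<kappa>\<^sup>2)
                            (32 * ln (2 / \<delta>) / (\<kappa>\<^sup>2 * (8 * \<eta> - w)\<^sup>2))"
    and anchor_event: "lo \<le> sigmoid \<theta>a" "sigmoid \<theta>a \<le> hi"
    and p_event:
      "clip01 ((\<Sum>k<K. b k) / real K - sqrt (ln (2 / \<delta>) / (2 * real K))) \<le> sigmoid (\<theta>i - \<theta>a)"
      "sigmoid (\<theta>i - \<theta>a) \<le> clip01 ((\<Sum>k<K. b k) / real K + sqrt (ln (2 / \<delta>) / (2 * real K)))"
  shows "esigmoid (elogit hi + elogit (clip01 ((\<Sum>k<K. b k) / real K + sqrt (ln (2 / \<delta>) / (2 * real K)))))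
       - esigmoid (elogit lo + elogit (clip01 ((\<Sum>k<K. b k) / real K - sqrt (ln (2 / \<delta>) / (2 * real K)))))
       \<le> 2 * \<eta>"
proof -
  define L where "L = ln (2 / \<delta>)"
  have "0 < L"
    unfolding L_def using delta by simp
  have "8 * L / \<kappa>\<^sup>2 \<le> real K" "32 * L / (\<kappa>\<^sup>2 * (8 * \<eta> - w)\<^sup>2) \<le> real K"
    using K_ge unfolding L_def by auto
  then have K1: "L / (2 * (\<kappa> / 4)\<^sup>2) \<le> real K"
    and K2: "L / (2 * (\<kappa> * (8 * \<eta> - w) / 8)\<^sup>2) \<le> real K"
    by (simp_all add: power_divide power_mult_distrib mult.commute)
  have "0 < L / (2 * (\<kappa> / 4)\<^sup>2)"
    using \<open>0 < L\<close> kappa by simp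
  with K1 have "0 < real K"
    by linarith
  have "sqrt (L / (2 * real K)) \<le> \<kappa> / 4"
    using sqrt_le_radius[OF _ \<open>0 < real K\<close> K1] kappa by simp
  moreover have "sqrt (L / (2 * real K)) \<le> \<kappa> * (8 * \<eta> - w) / 8"
    using sqrt_le_radius[OF _ \<open>0 < real K\<close> K2] kappa eta by simp
  moreover have "0 \<le> sqrt (L / (2 * real K))"
    using \<open>0 < L\<close> \<open>0 < real K\<close> by simp
  ultimately show ?thesis
    using transported_width_le[OF kappa p_range p_event _ _ _ wa] eta
    unfolding L_def by simp
qed

end
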